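(* Let $F$ be a minimally unsatisfiable clause-set. 1. If $v$ is a singular variable for $F$ which occurs (positively or negatively) in every clause of $F$, then $\{v\}\in F$ or $\{\overline{v}\}\in F$. 2. If $\{x\}\in F$ for some literal $x$, then $v:=\mathrm{var}(x)$ is singular for $F$, with $\mathrm{ldeg}_F(x)=1$. If moreover $F$ is saturated, then $v$ occurs in every clause of $F$.
   Context: Literals are variables $v$ and complements $\overline{v}$; a clause is a finite set of literals with no complementary pair; a clause-set is a finite set of clauses; $\mathrm{var}(F)$ is the set of variables of $F$ and $\mathrm{var}(x)$ the variable underlying literal $x$; $\mathrm{ldeg}_F(x)$ is the number of clauses of $F$ containing literal $x$. A minimally unsatisfiable $F$ is saturated if for every $C \in F$ and every literal $y$ with $\mathrm{var}(y) \in \mathrm{var}(F)\setminus \mathrm{var}(C)$, the clause-set $(F\setminus\{C\})\cup\{C\cup\{y\}\}$ is satisfiable. A variable $v$ is singular for $F$ if $\min(\mathrm{ldeg}_F(v),\mathrm{ldeg}_F(\overline{v}))=1$. *)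

theory Defs
  imports Main
begin

datatype 'v lit = Pos 'v | Neg 'v

fun var :: "'v lit \<Rightarrow> 'v" where
  "var (Pos v) = v" | "var (Neg v) = v"

fun comp :: "'v lit \<Rightarrow> 'v lit" where
  "comp (Pos v) = Neg v" | "comp (Neg v) = Pos v"

type_synonym 'v clause = "'v lit set"
type_synonym 'v cls = "'v clause set"

definition clause :: "'v clause \<Rightarrow> bool" where
  "clause C \<longleftrightarrow> finite C \<and> (\<forall>x\<in>C. comp x \<notin> C)"

definition clause_set :: "'v cls \<Rightarrow> bool" where
  "clause_set F \<longleftrightarrow> finite F \<and> (\<forall>C\<in>F. clause C)"

definition vars_cl :: "'v clause \<Rightarrow> 'v set" where
  "vars_cl C = var ` C"

definition vars :: "'v cls \<Rightarrow> 'v set" where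
  "vars F = (\<Union>C\<in>F. vars_cl C)"

definition ldeg :: "'v cls \<Rightarrow> 'v lit \<Rightarrow> nat" where
  "ldeg F x = card {C \<in> F. x \<in> C}"

fun sat_lit :: "('v \<Rightarrow> bool) \<Rightarrow> 'v lit \<Rightarrow> bool" where
  "sat_lit \<phi> (Pos v) = \<phi> v" | "sat_lit \<phi> (Neg v) = (\<not> \<phi> v)"

definition satisfiable :: "'v cls \<Rightarrow> bool" where
  "satisfiable F \<longleftrightarrow> (\<exists>\<phi>. \<forall>C\<in>F. \<exists>x\<in>C. sat_lit \<phi> x)"

definition min_unsat :: "'v cls \<Rightarrow> bool" where
  "min_unsat F \<longleftrightarrow> clause_set F \<and> \<not> satisfiable F \<and> (\<forall>C\<in>F. satisfiable (F - {C}))"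

definition saturated :: "'v cls \<Rightarrow> bool" where
  "saturated F \<longleftrightarrow> min_unsat F \<and>
     (\<forall>C\<in>F. \<forall>y. var y \<in> vars F - vars_cl C \<longrightarrow> satisfiable ((F - {C}) \<union> {C \<union> {y}}))"

definition singular :: "'v cls \<Rightarrow> 'v \<Rightarrow> bool" where
  "singular F v \<longleftrightarrow> min (ldeg F (Pos v)) (ldeg F (Neg v)) = 1"

end

theory Submission
  imports Defs
begin

text \<open>Both parts rest on one observation: a model of \<open>F - {C}\<close> must falsify \<open>C\<close>. For part 1,
  if the only clause \<open>C\<^sub>0\<close> containing the singular literal \<open>l\<close> had a further literal \<open>y\<close>, then
  making \<open>y\<close> and \<open>\<not>l\<close> true would satisfy \<open>C\<^sub>0\<close> and every other clause, since those contain \<open>\<not>l\<close>.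
  For part 2, a model of \<open>F - {D}\<close> with \<open>x \<in> D \<noteq> {x}\<close> satisfies the unit \<open>{x}\<close> and hence \<open>D\<close>; a
  model of \<open>F - {{x}}\<close> could be repaired to set \<open>x\<close> true if \<open>\<not>x\<close> occurred nowhere; and if
  \<open>var x\<close> were missing from \<open>C\<close>, a model of \<open>F\<close> with \<open>C\<close> extended by \<open>\<not>x\<close> would be a model of \<open>F\<close>.\<close>

definition models :: "('v \<Rightarrow> bool) \<Rightarrow> 'v cls \<Rightarrow> bool" where
  "models \<phi> F \<longleftrightarrow> (\<forall>C\<in>F. \<exists>x\<in>C. sat_lit \<phi> x)"

lemma satisfiable_iff_models: "satisfiable F \<longleftrightarrow> (\<exists>\<phi>. models \<phi> F)"
  by (simp add: satisfiable_def models_def)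

lemma sat_lit_comp [simp]: "sat_lit \<phi> (comp x) \<longleftrightarrow> \<not> sat_lit \<phi> x"
  by (cases x) auto

lemma var_comp [simp]: "var (comp x) = var x"
  by (cases x) auto

lemma lit_eq_or_comp_if_var_eq: "var y = var x \<Longrightarrow> y = x \<or> y = comp x"
  by (cases x; cases y) auto

lemma sat_lit_fun_upd_other: "var l \<noteq> v \<Longrightarrow> sat_lit (\<phi>(v := b)) l = sat_lit \<phi> l"
  by (cases l) auto

lemma ex_fun_upd_sat_lit: "\<exists>b. sat_lit (\<phi>(var x := b)) x"
  by (cases x) auto

lemma ex_sat_lit_both: "var x \<noteq> var y \<Longrightarrow> \<exists>\<phi>. sat_lit \<phi> x \<and> sat_lit \<phi> y"
  by (rule exI[of _ "\<lambda>v. if v = var x then x = Pos v else y = Pos v"]) (cases x; cases y; auto)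

lemma vars_cl_singleton [simp]: "vars_cl {x} = {var x}"
  by (simp add: vars_cl_def)

lemma models_insert_iff: "models \<phi> (insert C F) \<longleftrightarrow> (\<exists>x\<in>C. sat_lit \<phi> x) \<and> models \<phi> F"
  by (simp add: models_def)

lemma min_unsat_not_models: "min_unsat F \<Longrightarrow> \<not> models \<phi> F"
  by (auto simp: min_unsat_def satisfiable_iff_models)

lemma min_unsat_remove_clause:
  assumes "min_unsat F" "C \<in> F"
  obtains \<phi> where "models \<phi> (F - {C})" "\<forall>x\<in>C. \<not> sat_lit \<phi> x"
proof -
  from assms obtain \<phi> where \<phi>: "models \<phi> (F - {C})"
    by (auto simp: min_unsat_def satisfiable_iff_models)
  have "insert C (F - {C}) = F" using assms(2) by blast
  with \<phi> assms(1) have "\<forall>x\<in>C. \<not> sat_lit \<phi> x"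
    by (metis min_unsat_def models_insert_iff satisfiable_iff_models)
  with \<phi> show thesis by (rule that)
qed

lemma min_unsat_subsumption_free:
  assumes "min_unsat F" "C \<in> F" "D \<in> F" "C \<subseteq> D"
  shows "C = D"
proof (rule ccontr)
  assume "C \<noteq> D"
  obtain \<phi> where "models \<phi> (F - {D})" "\<forall>x\<in>D. \<not> sat_lit \<phi> x"
    using min_unsat_remove_clause[OF assms(1,3)] .
  with \<open>C \<noteq> D\<close> assms(2,4) show False by (auto simp: models_def)
qed

lemma min_unsat_no_pure_literal:
  assumes "min_unsat F" "C \<in> F" "x \<in> C"
  shows "\<exists>D\<in>F. comp x \<in> D"
proof (rule ccontr)
  assume pure: "\<not> (\<exists>D\<in>F. comp x \<in> D)"
  obtain \<phi> where \<phi>: "models \<phi> (F - {C})"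
    using min_unsat_remove_clause[OF assms(1,2)] by blast
  obtain b where b: "sat_lit (\<phi>(var x := b)) x" using ex_fun_upd_sat_lit by blast
  have "\<exists>z\<in>D. sat_lit (\<phi>(var x := b)) z" if "D \<in> F" for D
  proof (cases "D = C")
    case False
    with \<phi> \<open>D \<in> F\<close> obtain z where z: "z \<in> D" "sat_lit \<phi> z" by (auto simp: models_def)
    \<comment> \<open>the update can only falsify a literal of \<open>D\<close> that equals \<open>comp x\<close>, which is excluded\<close>
    then have "z = x \<or> sat_lit (\<phi>(var x := b)) z"
      using pure \<open>D \<in> F\<close> lit_eq_or_comp_if_var_eq sat_lit_fun_upd_other by metis
    with b z(1) show ?thesis by blast
  qed (use b assms(3) in blast)
  then have "models (\<phi>(var x := b)) F" by (simp add: models_def)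
  with assms(1) show False by (simp add: min_unsat_not_models)
qed

lemma unit_clause_if_ldeg_one:
  assumes unsat: "\<not> satisfiable F" and clauses: "\<forall>C\<in>F. clause C"
    and deg: "ldeg F l = 1" and occurs: "\<forall>C\<in>F. var l \<in> vars_cl C"
  shows "{l} \<in> F"
proof -
  obtain C\<^sub>0 where C\<^sub>0: "{C\<in>F. l \<in> C} = {C\<^sub>0}"
    using deg card_1_singletonE unfolding ldeg_def by blast
  then have "C\<^sub>0 \<in> F" "l \<in> C\<^sub>0" by auto
  have "C\<^sub>0 = {l}"
  proof (rule ccontr)
    assume "C\<^sub>0 \<noteq> {l}"
    with \<open>l \<in> C\<^sub>0\<close> obtain y where y: "y \<in> C\<^sub>0" "y \<noteq> l" by auto
    have "comp l \<notin> C\<^sub>0" using clauses \<open>C\<^sub>0 \<in> F\<close> \<open>l \<in> C\<^sub>0\<close> by (auto simp: clause_def)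
    with y have "var y \<noteq> var (comp l)"
      using lit_eq_or_comp_if_var_eq[of y l] by auto
    then obtain \<phi> where \<phi>: "sat_lit \<phi> y" "sat_lit \<phi> (comp l)"
      using ex_sat_lit_both by blast
    have "\<exists>z\<in>C. sat_lit \<phi> z" if "C \<in> F" for C
    proof (cases "l \<in> C")
      case True
      with C\<^sub>0 \<open>C \<in> F\<close> have "C = C\<^sub>0" by blast
      with \<phi>(1) y(1) show ?thesis by blast
    next
      case False
      from occurs \<open>C \<in> F\<close> obtain z where "z \<in> C" "var z = var l" by (auto simp: vars_cl_def)
      with False have "comp l \<in> C" using lit_eq_or_comp_if_var_eq by blast
      with \<phi>(2) show ?thesis by blast
    qed
    then have "models \<phi> F" by (simp add: models_def)
    with unsat show False by (auto simp: satisfiable_iff_models)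
  qed
  with \<open>C\<^sub>0 \<in> F\<close> show ?thesis by simp
qed

lemma ldeg_unit_clause:
  assumes "min_unsat F" "{x} \<in> F"
  shows "ldeg F x = 1"
proof -
  have "{C\<in>F. x \<in> C} = {{x}}"
    using min_unsat_subsumption_free[OF assms(1,2)] assms(2) by blast
  then show ?thesis by (simp add: ldeg_def)
qed

lemma ldeg_pos_if_occurs:
  assumes "finite F" "C \<in> F" "x \<in> C"
  shows "ldeg F x \<ge> 1"
proof -
  have "finite {C\<in>F. x \<in> C}" "{C\<in>F. x \<in> C} \<noteq> {}" using assms by auto
  then show ?thesis by (simp add: ldeg_def Suc_le_eq card_gt_0_iff)
qed

lemma singular_var_iff: "singular F (var x) \<longleftrightarrow> min (ldeg F x) (ldeg F (comp x)) = 1"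
  by (cases x) (auto simp: singular_def min.commute)

lemma saturated_unit_var_in_every_clause:
  assumes sat: "saturated F" and "{x} \<in> F" "C \<in> F"
  shows "var x \<in> vars_cl C"
proof (rule ccontr)
  assume "var x \<notin> vars_cl C"
  have mu: "min_unsat F" using sat by (simp add: saturated_def)
  have "var (comp x) \<in> vars F - vars_cl C"
    using \<open>{x} \<in> F\<close> \<open>var x \<notin> vars_cl C\<close> by (force simp: vars_def)
  with sat \<open>C \<in> F\<close> have "satisfiable ((F - {C}) \<union> {C \<union> {comp x}})"
    by (simp add: saturated_def)
  then obtain \<phi> where \<phi>: "models \<phi> ((F - {C}) \<union> {C \<union> {comp x}})"
    by (auto simp: satisfiable_iff_models)
  have "C \<noteq> {x}" using \<open>var x \<notin> vars_cl C\<close> by auto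
  with \<phi> \<open>{x} \<in> F\<close> have "sat_lit \<phi> x" by (auto simp: models_def)
  \<comment> \<open>so \<open>comp x\<close> is false under \<open>\<phi>\<close>, and the extended clause is satisfied inside \<open>C\<close>\<close>
  with \<phi> have "models \<phi> F" by (auto simp: models_def)
  with mu show False by (simp add: min_unsat_not_models)
qed

theorem lemma14:
  fixes F :: "'v cls"
  assumes "min_unsat F"
  shows "(\<forall>v. singular F v \<and> (\<forall>C\<in>F. v \<in> vars_cl C)
              \<longrightarrow> {Pos v} \<in> F \<or> {Neg v} \<in> F)
       \<and> (\<forall>x. {x} \<in> F \<longrightarrow>
              singular F (var x) \<and> ldeg F x = 1 \<and>
              (saturated F \<longrightarrow> (\<forall>C\<in>F. var x \<in> vars_cl C)))"
proof (intro conjI allI impI)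
  fix v assume "singular F v \<and> (\<forall>C\<in>F. v \<in> vars_cl C)"
  moreover have "\<not> satisfiable F" "\<forall>C\<in>F. clause C"
    using assms by (auto simp: min_unsat_def clause_set_def)
  ultimately show "{Pos v} \<in> F \<or> {Neg v} \<in> F"
    using unit_clause_if_ldeg_one[of F "Pos v"] unit_clause_if_ldeg_one[of F "Neg v"]
    by (auto simp: singular_def min_def split: if_splits)
next
  fix x assume "{x} \<in> F"
  show "ldeg F x = 1" using ldeg_unit_clause[OF assms \<open>{x} \<in> F\<close>] .
  moreover obtain D where "D \<in> F" "comp x \<in> D"
    using min_unsat_no_pure_literal[OF assms \<open>{x} \<in> F\<close>] by blast
  then have "ldeg F (comp x) \<ge> 1"
    using assms by (intro ldeg_pos_if_occurs) (auto simp: min_unsat_def clause_set_def)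
  ultimately show "singular F (var x)" by (simp add: singular_var_iff)
next
  fix x assume "{x} \<in> F" "saturated F"
  then show "\<forall>C\<in>F. var x \<in> vars_cl C" by (blast intro: saturated_unit_var_in_every_clause)
qed

end
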